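(* Let $\psi_u\in(0,2\pi)$ satisfy $t\mu\notin\mathbb Z$, where $t=\frac34-\frac{\psi_u}{2\pi}$, and let $\psi_{\tilde u}\in\mathbb R$ be arbitrary. Then $$Y_{\tilde u}=\frac{\zeta_{\tilde u}\sin^2\!\big(\psi_{\tilde u}-\frac{\pi}{\mu}+\frac{2\pi}{\mu}\lceil t\mu\rceil\big)}{V^2},\qquad V=\frac{\sin(\pi/\mu)}{W}.$$
   Context: Setup: Let $W\ge 1$ be an integer and $\mu\ge 2$ an even integer, and set $K=\mu W+1$. Let $\zeta_u>0$, $\psi_u\in(0,2\pi)$, and for $k=1,\dots,K$ let $h_{u,k}=\zeta_u^{1/2}e^{j(\psi_u+2\pi(k-1)/\mu)}$, where $j=\sqrt{-1}$. Let $\mathcal K_1=\{k\in\{2,\dots,K\}:\operatorname{Re}(h_{u,k})>0\}$. For an interfering user $\tilde u$ with $\zeta_{\tilde u}>0$ and phase $\psi_{\tilde u}$, let $h_{\tilde u,k}=\zeta_{\tilde u}^{1/2}e^{j(\psi_{\tilde u}+2\pi(k-1)/\mu)}$ and $Y_{\tilde u}=\big(\sum_{k\in\mathcal K_1}\operatorname{Re}(h_{\tilde u,k})\big)^2$. *)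

theory Defs
  imports Complex_Main
begin

definition chan :: "real \<Rightarrow> real \<Rightarrow> nat \<Rightarrow> nat \<Rightarrow> complex" where
  "chan \<zeta> \<psi> \<mu> k =
     complex_of_real (sqrt \<zeta>) * exp (\<i> * complex_of_real (\<psi> + 2 * pi * (real k - 1) / real \<mu>))"

text \<open>K_1 = {k in {2..K} : Re(h_{u,k}) > 0}, with K = mu W + 1.\<close>
definition K1 :: "nat \<Rightarrow> nat \<Rightarrow> real \<Rightarrow> real \<Rightarrow> nat set" where
  "K1 \<mu> W \<zeta>u \<psi>u = {k \<in> {2..\<mu> * W + 1}. Re (chan \<zeta>u \<psi>u \<mu> k) > 0}"

definition Yint :: "nat \<Rightarrow> nat \<Rightarrow> real \<Rightarrow> real \<Rightarrow> real \<Rightarrow> real \<Rightarrow> real" where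
  "Yint \<mu> W \<zeta>u \<psi>u \<zeta>v \<psi>v = (\<Sum>k\<in>K1 \<mu> W \<zeta>u \<psi>u. Re (chan \<zeta>v \<psi>v \<mu> k))\<^sup>2"

end

theory Submission
  imports Defs
begin

text \<open>
  Since \<open>\<psi>u = 3\<pi>/2 - 2\<pi>t\<close>, \<open>Re h_{u,k}\<close> is a positive multiple of
  \<open>sin (2\<pi>(k - 1 - t\<mu>)/\<mu>)\<close>; as \<open>t\<mu>\<close> is not an integer, it is positive exactly when
  \<open>(k - 1 - \<lceil>t\<mu>\<rceil>) mod \<mu> < \<mu>/2\<close>. So the sum defining \<open>Y\<close> runs over \<open>\<mu>W\<close> consecutive
  indices of a \<open>\<mu>\<close>-periodic summand and equals \<open>W\<close> times its sum over the single period
  starting at \<open>\<lceil>t\<mu>\<rceil>\<close>. That is a sum of \<open>\<mu>/2\<close> cosines in arithmetic progression, which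
  telescopes via \<open>2 sin d cos x = sin (x + d) - sin (x - d)\<close>.
\<close>

lemma periodic_sum_shift:
  fixes g :: "int \<Rightarrow> 'a::comm_monoid_add"
  assumes periodic: "\<And>m. g (m + int p) = g m"
  shows "(\<Sum>i<p. g (a + int i)) = (\<Sum>i<p. g (b + int i))"
proof -
  define S where "S c = (\<Sum>i<p. g (c + int i))" for c
  have S_succ: "S (c + 1) = S c" for c
  proof (cases p)
    case (Suc q)
    have "S c = g c + (\<Sum>i<q. g (c + 1 + int i))"
      unfolding S_def Suc sum.lessThan_Suc_shift by (simp add: add_ac)
    also have "g c = g (c + 1 + int q)"
      using periodic[of c] Suc by (simp add: add_ac)
    finally show ?thesis
      by (simp add: S_def Suc add_ac)
  qed (simp add: S_def)
  have S_const: "S c = S 0" for c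
  proof (induction c rule: int_induct[where k = 0])
    case (step2 i)
    then show ?case
      using S_succ[of "i - 1"] by simp
  qed (simp_all add: S_succ)
  show ?thesis
    using S_const[of a] S_const[of b] by (simp add: S_def)
qed

lemma periodic_sum_repeat:
  fixes g :: "int \<Rightarrow> 'a::semiring_1"
  assumes periodic: "\<And>m. g (m + int p) = g m"
  shows "(\<Sum>j<p * W. g (a + int j)) = of_nat W * (\<Sum>i<p. g (b + int i))"
proof -
  have "(\<Sum>j<p * W. g (a + int j)) = (\<Sum>c<W. \<Sum>j\<in>{c * p..<c * p + p}. g (a + int j))"
    using sum.nat_group[of "\<lambda>j. g (a + int j)" p W] by (simp add: mult.commute)
  also have "\<dots> = (\<Sum>c<W. \<Sum>i<p. g ((a + int (c * p)) + int i))"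
  proof -
    have "(\<Sum>j\<in>{c * p..<c * p + p}. f j) = (\<Sum>i<p. f (c * p + i))" for c and f :: "nat \<Rightarrow> 'a"
      using sum.shift_bounds_nat_ivl[of f 0 "c * p" p] by (simp add: atLeast0LessThan add.commute)
    then show ?thesis
      by (simp add: add_ac)
  qed
  also have "\<dots> = (\<Sum>c<W. \<Sum>i<p. g (b + int i))"
    by (intro sum.cong refl periodic_sum_shift periodic)
  finally show ?thesis
    by simp
qed

lemma sum_cos_arith_progression:
  fixes a d :: real
  shows "2 * sin d * (\<Sum>i<L. cos (a + 2 * real i * d))
    = sin (a + (2 * real L - 1) * d) - sin (a - d)"
proof (induction L)
  case (Suc L)
  have "2 * sin d * cos z = sin (z + d) - sin (z - d)" for z
    by (simp add: sin_add sin_diff)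
  from this[of "a + 2 * real L * d"]
  have "2 * sin d * cos (a + 2 * real L * d)
      = sin (a + (2 * real L + 1) * d) - sin (a + (2 * real L - 1) * d)"
    by (simp add: algebra_simps)
  with Suc show ?case
    by (simp add: algebra_simps)
qed simp

lemma sum_cos_half_turn:
  fixes a d :: real
  assumes "2 * real L * d = pi"
  shows "sin d * (\<Sum>i<L. cos (a + 2 * real i * d)) = - sin (a - d)"
proof -
  have "a + (2 * real L - 1) * d = (a - d) + pi"
    using assms by (simp add: algebra_simps)
  then have "sin (a + (2 * real L - 1) * d) = - sin (a - d)"
    by (simp only: sin_periodic_pi)
  then show ?thesis
    using sum_cos_arith_progression[of d a L] by simp
qed

lemma sin_pos_iff_mod:
  fixes s :: real and m :: int and \<mu> :: nat
  assumes "even \<mu>" "\<mu> > 0" "s \<notin> \<int>"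
  shows "0 < sin (2 * pi * (m - s) / \<mu>) \<longleftrightarrow> (m - \<lceil>s\<rceil>) mod \<mu> < int (\<mu> div 2)"
proof -
  define r where "r = (m - \<lceil>s\<rceil>) mod \<mu>"
  define q where "q = (m - \<lceil>s\<rceil>) div \<mu>"
  define \<delta> where "\<delta> = \<lceil>s\<rceil> - s"
  obtain h where h: "\<mu> = 2 * h" "h > 0"
    using assms by (auto elim!: evenE)
  have r: "0 \<le> r" "r < \<mu>"
    using assms by (simp_all add: r_def)
  have "s \<noteq> \<lceil>s\<rceil>"
    using assms(3) Ints_of_int by metis
  then have \<delta>: "0 < \<delta>" "\<delta> < 1"
    using ceiling_correct[of s] unfolding \<delta>_def by linarith+
  define y where "y = (r + \<delta>) / h"
  have "m - s = (r + \<delta>) + \<mu> * q"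
    by (simp add: r_def q_def \<delta>_def flip: of_int_add of_int_mult)
  then have "2 * pi * (m - s) / \<mu> = pi * y + 2 * pi * q"
    using h by (simp add: y_def field_simps)
  then have sin_eq: "sin (2 * pi * (m - s) / \<mu>) = sin (pi * y)"
    by (simp add: sin_add)
  have "0 < y" "y < 2"
    using r \<delta> h by (simp_all add: y_def field_simps)
  moreover have "y < 1 \<longleftrightarrow> r < int (\<mu> div 2)"
    using \<delta> h by (simp add: y_def field_simps) linarith
  moreover have "0 < sin (pi * y) \<longleftrightarrow> y < 1" if "0 < y" "y < 2"
    using that sin_gt_zero[of "pi * y"] sin_le_zero[of "pi * y"] by (cases "y < 1") auto
  ultimately show ?thesis
    using sin_eq by (simp add: r_def)
qed

text \<open>Here \<open>m\<close> plays the role of \<open>k - 1\<close> and \<open>n\<close> that of \<open>\<lceil>t\<mu>\<rceil>\<close>.\<close>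

definition half_period_cos :: "nat \<Rightarrow> int \<Rightarrow> real \<Rightarrow> int \<Rightarrow> real" where
  "half_period_cos \<mu> n \<psi> m =
     (if (m - n) mod \<mu> < int (\<mu> div 2) then cos (\<psi> + 2 * pi * m / \<mu>) else 0)"

lemma half_period_cos_periodic:
  assumes "\<mu> > 0"
  shows "half_period_cos \<mu> n \<psi> (m + int \<mu>) = half_period_cos \<mu> n \<psi> m"
proof -
  have "(m + int \<mu> - n) mod \<mu> = (m - n) mod \<mu>"
    by (metis add.commute add_diff_eq mod_add_self1)
  moreover have "\<psi> + 2 * pi * (m + int \<mu>) / \<mu> = (\<psi> + 2 * pi * m / \<mu>) + 2 * pi"
    using assms by (simp add: field_simps)
  ultimately show ?thesis
    unfolding half_period_cos_def by (simp only: cos_periodic)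
qed

lemma sum_half_period_cos:
  assumes "even \<mu>" "\<mu> > 0"
  shows "sin (pi / \<mu>) * (\<Sum>i<\<mu>. half_period_cos \<mu> n \<psi> (n + int i))
    = - sin (\<psi> - pi / \<mu> + 2 * pi / \<mu> * n)"
proof -
  define a where "a = \<psi> + 2 * pi * n / \<mu>"
  have "(\<Sum>i<\<mu>. half_period_cos \<mu> n \<psi> (n + int i))
      = (\<Sum>i\<in>{i\<in>{..<\<mu>}. i < \<mu> div 2}. cos (a + 2 * real i * (pi / \<mu>)))"
    unfolding sum.inter_filter[OF finite_lessThan]
    by (intro sum.cong refl) (auto simp: half_period_cos_def a_def field_simps)
  also have "{i\<in>{..<\<mu>}. i < \<mu> div 2} = {..<\<mu> div 2}"
    by auto
  moreover have "2 * real (\<mu> div 2) * (pi / \<mu>) = pi"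
    using assms by (auto elim!: evenE)
  ultimately show ?thesis
    using sum_cos_half_turn[of "\<mu> div 2" "pi / \<mu>" a] by (simp add: a_def algebra_simps)
qed

lemma Re_chan:
  assumes "\<zeta> \<ge> 0"
  shows "Re (chan \<zeta> \<psi> \<mu> k) = sqrt \<zeta> * cos (\<psi> + 2 * pi * (real k - 1) / \<mu>)"
  using assms by (simp add: chan_def Re_exp)

lemma K1_eq:
  assumes "even \<mu>" "\<mu> > 0" "\<zeta>u > 0"
    and t_def: "t = 3/4 - \<psi>u / (2 * pi)"
    and "t * \<mu> \<notin> \<int>"
  shows "K1 \<mu> W \<zeta>u \<psi>u = {k \<in> {2..\<mu> * W + 1}. (int k - 1 - \<lceil>t * \<mu>\<rceil>) mod \<mu> < int (\<mu> div 2)}"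
proof -
  have "cos (\<psi>u + 2 * pi * (real k - 1) / \<mu>) = sin (2 * pi * (of_int (int k - 1) - t * \<mu>) / \<mu>)" for k
  proof -
    define x where "x = 2 * pi * (of_int (int k - 1) - t * \<mu>) / \<mu>"
    have "\<psi>u + 2 * pi * (real k - 1) / \<mu> = (x - pi / 2) + 2 * pi"
      using assms(2) by (simp add: x_def t_def field_simps)
    then have "cos (\<psi>u + 2 * pi * (real k - 1) / \<mu>) = cos (x - pi / 2)"
      by (simp only: cos_periodic)
    then show ?thesis
      by (simp add: x_def cos_diff)
  qed
  then have "0 < Re (chan \<zeta>u \<psi>u \<mu> k) \<longleftrightarrow> (int k - 1 - \<lceil>t * \<mu>\<rceil>) mod \<mu> < int (\<mu> div 2)" for k
    using assms sin_pos_iff_mod[of \<mu> "t * \<mu>" "int k - 1"] by (simp add: Re_chan zero_less_mult_iff)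
  then show ?thesis
    by (simp add: K1_def)
qed

lemma sum_Re_chan_K1:
  assumes "even \<mu>" "\<mu> > 0" "\<zeta>u > 0" "\<zeta>v \<ge> 0"
    and "t = 3/4 - \<psi>u / (2 * pi)"
    and "t * \<mu> \<notin> \<int>"
  shows "(\<Sum>k\<in>K1 \<mu> W \<zeta>u \<psi>u. Re (chan \<zeta>v \<psi>v \<mu> k))
    = sqrt \<zeta>v * (\<Sum>j<\<mu> * W. half_period_cos \<mu> \<lceil>t * \<mu>\<rceil> \<psi>v (1 + int j))"
proof -
  have "(\<Sum>k\<in>K1 \<mu> W \<zeta>u \<psi>u. Re (chan \<zeta>v \<psi>v \<mu> k))
      = (\<Sum>k\<in>{2..<\<mu> * W + 2}. sqrt \<zeta>v * half_period_cos \<mu> \<lceil>t * \<mu>\<rceil> \<psi>v (int k - 1))"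
    unfolding K1_eq[OF assms(1-3,5,6)] sum.inter_filter[OF finite_atLeastAtMost]
    by (intro sum.cong) (auto simp: assms(4) Re_chan half_period_cos_def)
  also have "\<dots> = (\<Sum>j<\<mu> * W. sqrt \<zeta>v * half_period_cos \<mu> \<lceil>t * \<mu>\<rceil> \<psi>v (int (j + 2) - 1))"
    using sum.shift_bounds_nat_ivl[of _ 0 2 "\<mu> * W"] by (simp only: add_0 atLeast0LessThan)
  also have "\<dots> = sqrt \<zeta>v * (\<Sum>j<\<mu> * W. half_period_cos \<mu> \<lceil>t * \<mu>\<rceil> \<psi>v (1 + int j))"
    by (simp add: sum_distrib_left add_ac)
  finally show ?thesis .
qed

theorem theorem3:
  fixes W \<mu> :: nat and \<zeta>u \<psi>u \<zeta>v \<psi>v t V :: real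
  assumes "W \<ge> 1" and "\<mu> \<ge> 2" and "even \<mu>"
    and "\<zeta>u > 0" and "0 < \<psi>u" and "\<psi>u < 2 * pi"
    and "\<zeta>v > 0"
    and t_def: "t = 3/4 - \<psi>u / (2 * pi)"
    and "t * real \<mu> \<notin> \<int>"
    and V_def: "V = sin (pi / real \<mu>) / real W"
  shows "Yint \<mu> W \<zeta>u \<psi>u \<zeta>v \<psi>v =
    \<zeta>v * (sin (\<psi>v - pi / real \<mu> + 2 * pi / real \<mu> * real_of_int \<lceil>t * real \<mu>\<rceil>))\<^sup>2 / V\<^sup>2"
proof -
  define n where "n = \<lceil>t * real \<mu>\<rceil>"
  define S where "S = (\<Sum>i<\<mu>. half_period_cos \<mu> n \<psi>v (n + int i))"
  have \<mu>: "\<mu> > 0"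
    using assms(2) by simp
  have "(\<Sum>j<\<mu> * W. half_period_cos \<mu> n \<psi>v (1 + int j)) = real W * S"
    unfolding S_def using half_period_cos_periodic[OF \<mu>] by (rule periodic_sum_repeat)
  then have Y: "Yint \<mu> W \<zeta>u \<psi>u \<zeta>v \<psi>v = \<zeta>v * (real W * S)\<^sup>2"
    using sum_Re_chan_K1[OF assms(3) \<mu> assms(4) _ t_def assms(9)] assms(7)
    by (simp add: Yint_def n_def power_mult_distrib)
  have "sin (pi / \<mu>) > 0"
    using assms(2) by (intro sin_gt_zero) (simp_all add: field_simps)
  moreover have "sin (pi / \<mu>) * S = - sin (\<psi>v - pi / \<mu> + 2 * pi / \<mu> * n)"
    unfolding S_def using sum_half_period_cos[OF assms(3) \<mu>] .
  ultimately have S: "S = - sin (\<psi>v - pi / \<mu> + 2 * pi / \<mu> * n) / sin (pi / \<mu>)"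
    by (simp add: field_simps)
  show ?thesis
    using Y S by (simp add: V_def n_def field_simps power2_eq_square)
qed

end
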